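(* Let $\pi_E$ be a deterministic expert policy in a finite MDP whose induced chain $P_E$ is irreducible and aperiodic, with stationary state-action distribution $\rho^E$ and mixing time $\tau_{\mathrm{mix}}$. Let $D$ be the set of state-action pairs visited by an expert trajectory, and $R_{\mathrm{int}}(s,a)=\mathbb{1}\{(s,a)\in D\}$. Let $\pi_I$ be an imitation learner policy whose induced chain is irreducible and aperiodic, with stationary state-action distribution $\rho^I$, and suppose $\mathbb{E}_{\rho^I}[R_{\mathrm{int}}]=1-\kappa$. Then for every reward function $R:S\times A\to[0,1]$, $$\mathbb{E}_{\rho^I}[R]\;\ge\;(1-\kappa)\,\mathbb{E}_{\rho^E}[R]-4\tau_{\mathrm{mix}}\,\kappa.$$
   Context: For a policy $\pi$ in a finite MDP (states $S$, actions $A$, kernel $T$), $P_\pi(s,s')=\sum_a\pi(a\mid s)T(s'\mid s,a)$; if irreducible and aperiodic it has stationary distribution $\rho^\pi_S$, and $\rho^\pi(s,a)=\rho^\pi_S(s)\pi(a\mid s)$; $\mathbb{E}_{\rho}[R]=\sum_{s,a}\rho(s,a)R(s,a)$. Here $P_E=P_{\pi_E}$, $\rho^E=\rho^{\pi_E}$, $\rho^E_S=\rho^{\pi_E}_S$, $\rho^I=\rho^{\pi_I}$. The expert trajectory is generated by running $\pi_E$ in the MDP, so every $(s,a)\in D$ satisfies $\pi_E(a\mid s)=1$. The mixing time $\tau_{\mathrm{mix}}$ is the smallest integer $t\ge0$ with $\max_{s'}\|\mathbb{1}(s')^\top P_E^t-\rho^E_S\|_{\mathrm{TV}}\le\tfrac14$,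 where $\|\rho_1-\rho_2\|_{\mathrm{TV}}=\sup_M|\rho_1(M)-\rho_2(M)|$. *)

theory Defs
  imports Complex_Main
begin

text \<open>Finite MDP: states 's::finite, actions 'a::finite, kernel T s a s' = T(s'|s,a).
 A policy pol s a = pol(a|s).\<close>

definition stoch_kernel :: "('s::finite \<Rightarrow> 'a::finite \<Rightarrow> 's \<Rightarrow> real) \<Rightarrow> bool" where
  "stoch_kernel T \<longleftrightarrow> (\<forall>s a s'. 0 \<le> T s a s') \<and> (\<forall>s a. (\<Sum>s'\<in>UNIV. T s a s') = 1)"

definition policy :: "('s::finite \<Rightarrow> 'a::finite \<Rightarrow> real) \<Rightarrow> bool" where
  "policy pol \<longleftrightarrow> (\<forall>s a. 0 \<le> pol s a) \<and> (\<forall>s. (\<Sum>a\<in>UNIV. pol s a) = 1)"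

definition deterministic_policy :: "('s::finite \<Rightarrow> 'a::finite \<Rightarrow> real) \<Rightarrow> bool" where
  "deterministic_policy pol \<longleftrightarrow> policy pol \<and> (\<forall>s. \<exists>a. pol s a = 1)"

definition induced_chain :: "('s::finite \<Rightarrow> 'a::finite \<Rightarrow> real) \<Rightarrow> ('s \<Rightarrow> 'a \<Rightarrow> 's \<Rightarrow> real) \<Rightarrow> 's \<Rightarrow> 's \<Rightarrow> real" where
  "induced_chain pol T s s' = (\<Sum>a\<in>UNIV. pol s a * T s a s')"

fun mpow :: "('s::finite \<Rightarrow> 's \<Rightarrow> real) \<Rightarrow> nat \<Rightarrow> 's \<Rightarrow> 's \<Rightarrow> real" where
  "mpow P 0 s s' = (if s = s' then 1 else 0)"
| "mpow P (Suc n) s s' = (\<Sum>u\<in>UNIV. mpow P n s u * P u s')"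

definition irreducible_chain :: "('s::finite \<Rightarrow> 's \<Rightarrow> real) \<Rightarrow> bool" where
  "irreducible_chain P \<longleftrightarrow> (\<forall>s s'. \<exists>n>0. mpow P n s s' > 0)"

definition aperiodic_chain :: "('s::finite \<Rightarrow> 's \<Rightarrow> real) \<Rightarrow> bool" where
  "aperiodic_chain P \<longleftrightarrow> (\<forall>s. Gcd {n::nat. n > 0 \<and> mpow P n s s > 0} = 1)"

definition prob_dist :: "('s::finite \<Rightarrow> real) \<Rightarrow> bool" where
  "prob_dist p \<longleftrightarrow> (\<forall>s. 0 \<le> p s) \<and> (\<Sum>s\<in>UNIV. p s) = 1"

definition stationary_dist :: "('s::finite \<Rightarrow> 's \<Rightarrow> real) \<Rightarrow> ('s \<Rightarrow> real) \<Rightarrow> bool" where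
  "stationary_dist P rho \<longleftrightarrow> prob_dist rho \<and> (\<forall>s'. (\<Sum>s\<in>UNIV. rho s * P s s') = rho s')"

definition tv_dist :: "('s::finite \<Rightarrow> real) \<Rightarrow> ('s \<Rightarrow> real) \<Rightarrow> real" where
  "tv_dist p q = Max ((\<lambda>M. \<bar>(\<Sum>x\<in>M. p x) - (\<Sum>x\<in>M. q x)\<bar>) ` (UNIV :: 's set set))"

definition mixing_time :: "('s::finite \<Rightarrow> 's \<Rightarrow> real) \<Rightarrow> ('s \<Rightarrow> real) \<Rightarrow> nat" where
  "mixing_time P rho = (LEAST t. Max ((\<lambda>s'. tv_dist (mpow P t s') rho) ` UNIV) \<le> 1/4)"

text \<open>State-action expectation E_rho[R] with rho(s,a) = rhoS(s) pi(a|s).\<close>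
definition sa_expect :: "('s::finite \<Rightarrow> real) \<Rightarrow> ('s \<Rightarrow> 'a::finite \<Rightarrow> real) \<Rightarrow> ('s \<Rightarrow> 'a \<Rightarrow> real) \<Rightarrow> real" where
  "sa_expect rhoS pol R = (\<Sum>s\<in>UNIV. \<Sum>a\<in>UNIV. rhoS s * pol s a * R s a)"

definition trajectory :: "('s::finite \<Rightarrow> 'a::finite \<Rightarrow> real) \<Rightarrow> ('s \<Rightarrow> 'a \<Rightarrow> 's \<Rightarrow> real) \<Rightarrow> 's list \<Rightarrow> 'a list \<Rightarrow> bool" where
  "trajectory pol T ss as \<longleftrightarrow> length ss = length as \<and>
     (\<forall>t < length ss. pol (ss ! t) (as ! t) > 0) \<and>
     (\<forall>t. Suc t < length ss \<longrightarrow> T (ss ! t) (as ! t) (ss ! Suc t) > 0)"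

end

theory Submission
  imports Defs
begin

text \<open>
  Write \<open>d = \<rho>\<^sup>I - \<rho>\<^sup>E\<close> and let \<open>a(s)\<close> be the expert action. Since every pair in \<open>D\<close> is an
  expert pair, the learner plays \<open>a(s)\<close> with \<open>\<rho>\<^sup>I\<close>-average probability at least \<open>1 - \<kappa>\<close>.
  This gives \<open>E\<^sub>I[R] \<ge> \<Sum>\<^sub>s \<rho>\<^sup>I(s) R(s, a(s)) - \<kappa>\<close>, and it bounds the l1 distance between
  corresponding rows of \<open>P\<^sub>I\<close> and \<open>P\<^sub>E\<close>, so that \<open>d = d P\<^sub>E + e\<close> with \<open>|e|\<^sub>1 \<le> 2\<kappa>\<close>. Unrolling
  this \<open>\<tau>\<close> times, where \<open>\<tau>\<close> is the mixing time, and using that \<open>P\<^sub>E\<^sup>\<tau>\<close> halves the l1 norm of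
  vectors summing to zero yields \<open>|d|\<^sub>1 \<le> 4\<tau>\<kappa>\<close>; pairing \<open>d\<close> with a \<open>[0,1]\<close>-valued function
  costs at most \<open>|d|\<^sub>1/2\<close>. A zero mixing time forces a single state, where the bound is
  immediate.

  That the mixing time is attained at all needs irreducibility and aperiodicity of \<open>P\<^sub>E\<close>:
  the return times to a state form an additive semigroup of gcd 1, hence contain all large
  integers, so some power of \<open>P\<^sub>E\<close> is entrywise positive and Doeblin's contraction applies.
\<close>

section \<open>Numerical semigroups\<close>

lemma add_closed_mult_mem:
  fixes A :: "nat set"
  assumes "0 \<in> A" and "\<And>a b. a \<in> A \<Longrightarrow> b \<in> A \<Longrightarrow> a + b \<in> A" and "a \<in> A"
  shows "k * a \<in> A"
  by (induction k) (simp_all add: assms)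

lemma Gcd_Un: "Gcd (A \<union> B) = gcd (Gcd A) (Gcd B)" for A B :: "'a::semiring_Gcd set"
proof -
  have "\<And>d. \<lbrakk>d dvd Gcd A; d dvd Gcd B\<rbrakk> \<Longrightarrow> d dvd Gcd (A \<union> B)"
    by (meson UnE Gcd_greatest Gcd_dvd dvd_trans)
  moreover have "Gcd (A \<union> B) dvd Gcd A" "Gcd (A \<union> B) dvd Gcd B"
    by (auto intro: Gcd_greatest Gcd_dvd)
  ultimately show ?thesis
    by (meson gcd_unique normalize_Gcd)
qed

lemma Gcd_finite_subset_nat:
  fixes S :: "nat set"
  obtains F where "finite F" "F \<subseteq> S" "Gcd F = Gcd S"
proof -
  define G where "G = {Gcd F | F. finite F \<and> F \<subseteq> S}"
  have "Gcd G \<in> G"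
  proof (rule Gcd_in)
    fix a b assume "a \<in> G" "b \<in> G"
    then obtain F1 F2 where "finite F1" "F1 \<subseteq> S" "a = Gcd F1" "finite F2" "F2 \<subseteq> S" "b = Gcd F2"
      unfolding G_def by blast
    then show "gcd a b \<in> G"
      unfolding G_def by (auto simp: Gcd_Un[symmetric] intro!: exI[of _ "F1 \<union> F2"])
  qed (auto simp: G_def)
  then obtain F where F: "finite F" "F \<subseteq> S" "Gcd G = Gcd F"
    unfolding G_def by blast
  have "Gcd F dvd s" if "s \<in> S" for s
  proof -
    have "s \<in> G" unfolding G_def using that by (auto intro!: exI[of _ "{s}"])
    then show ?thesis using F(3) by (metis Gcd_dvd)
  qed
  then have "Gcd F dvd Gcd S" by (rule Gcd_greatest)
  moreover have "Gcd S dvd Gcd F" using F(2) by (simp add: Gcd_greatest Gcd_dvd subset_iff)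
  ultimately show ?thesis using that F by (simp add: dvd_antisym)
qed

lemma add_closed_Gcd_step:
  fixes A :: "nat set"
  assumes zero: "0 \<in> A" and add: "\<And>a b. a \<in> A \<Longrightarrow> b \<in> A \<Longrightarrow> a + b \<in> A"
    and "finite F" and "F \<subseteq> A"
  shows "\<exists>q. q \<in> A \<and> q + Gcd F \<in> A"
  using \<open>finite F\<close> \<open>F \<subseteq> A\<close>
proof (induction F rule: finite_induct)
  case empty
  then show ?case using zero by auto
next
  case (insert s F)
  then obtain q where q: "q \<in> A" "q + Gcd F \<in> A" by auto
  have s: "s \<in> A" using insert.prems by simp
  show ?case
  proof (cases "s = 0")
    case True
    then show ?thesis using q by auto
  next
    case False
    then obtain x y where xy: "s * x = Gcd F * y + gcd s (Gcd F)"
      using bezout_nat by blast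
    have "s * x + q * y = (q + Gcd F) * y + Gcd (insert s F)"
      using xy by (simp add: add_mult_distrib)
    moreover have "s * x + q * y \<in> A"
      using add add_closed_mult_mem[OF zero add] s q by (metis mult.commute)
    moreover have "(q + Gcd F) * y \<in> A"
      using add_closed_mult_mem[OF zero add q(2)] by (metis mult.commute)
    ultimately show ?thesis by (intro exI[of _ "(q + Gcd F) * y"]) simp
  qed
qed

lemma add_closed_Gcd_1_eventually:
  fixes A :: "nat set"
  assumes zero: "0 \<in> A" and add: "\<And>a b. a \<in> A \<Longrightarrow> b \<in> A \<Longrightarrow> a + b \<in> A"
    and gcd: "Gcd A = 1"
  shows "eventually (\<lambda>n. n \<in> A) sequentially"
proof -
  obtain F where "finite F" "F \<subseteq> A" "Gcd F = Gcd A"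
    by (rule Gcd_finite_subset_nat)
  with gcd obtain q where q: "q \<in> A" "Suc q \<in> A"
    using add_closed_Gcd_step[OF zero add, of F] by auto
  have mult: "k * a \<in> A" if "a \<in> A" for k a
    using add_closed_mult_mem[OF zero add that] .
  have "n \<in> A" if n: "q * q \<le> n" for n
  proof (cases "q = 0")
    case True
    then show ?thesis using mult[OF q(2), of n] by simp
  next
    case False
    define r where "r = n mod q"
    have "q \<le> n div q" using div_le_mono[OF n, of q] False by simp
    then have "r \<le> n div q" unfolding r_def using mod_less_divisor[of q n] False by linarith
    then have "n = (n div q - r) * q + r * Suc q"
      unfolding r_def by (simp add: diff_mult_distrib)
    moreover have "(n div q - r) * q \<in> A" by (rule mult[OF q(1)])
    moreover have "r * Suc q \<in> A" by (rule mult[OF q(2)])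
    ultimately show ?thesis using add by metis
  qed
  then show ?thesis unfolding eventually_sequentially by blast
qed

section \<open>Row vectors and stochastic matrices\<close>

definition stochastic_matrix :: "('s::finite \<Rightarrow> 's \<Rightarrow> real) \<Rightarrow> bool" where
  "stochastic_matrix P \<longleftrightarrow> (\<forall>x y. 0 \<le> P x y) \<and> (\<forall>x. (\<Sum>y\<in>UNIV. P x y) = 1)"

definition vec_mat :: "('s::finite \<Rightarrow> real) \<Rightarrow> ('s \<Rightarrow> 's \<Rightarrow> real) \<Rightarrow> 's \<Rightarrow> real" where
  "vec_mat v P y = (\<Sum>x\<in>UNIV. v x * P x y)"

definition norm1 :: "('s::finite \<Rightarrow> real) \<Rightarrow> real" where
  "norm1 v = (\<Sum>x\<in>UNIV. \<bar>v x\<bar>)"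

lemma vec_mat_point_mass: "vec_mat (\<lambda>y. if x = y then 1 else 0) Q = Q x"
  by (simp add: vec_mat_def fun_eq_iff of_bool_def[symmetric])

lemma vec_mat_mpow_0 [simp]: "vec_mat v (mpow P 0) = v"
  by (simp add: vec_mat_def fun_eq_iff of_bool_def[symmetric])

lemma vec_mat_assoc:
  "vec_mat v (\<lambda>x z. \<Sum>y\<in>UNIV. A x y * B y z) = vec_mat (vec_mat v A) B"
proof
  fix z
  have "vec_mat v (\<lambda>x z. \<Sum>y\<in>UNIV. A x y * B y z) z = (\<Sum>x\<in>UNIV. \<Sum>y\<in>UNIV. v x * A x y * B y z)"
    unfolding vec_mat_def by (simp add: sum_distrib_left mult.assoc)
  also have "\<dots> = (\<Sum>y\<in>UNIV. \<Sum>x\<in>UNIV. v x * A x y * B y z)"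
    by (rule sum.swap)
  also have "\<dots> = vec_mat (vec_mat v A) B z"
    unfolding vec_mat_def by (simp add: sum_distrib_right)
  finally show "vec_mat v (\<lambda>x z. \<Sum>y\<in>UNIV. A x y * B y z) z = vec_mat (vec_mat v A) B z" .
qed

lemma vec_mat_mpow_Suc: "vec_mat v (mpow P (Suc n)) = vec_mat (vec_mat v (mpow P n)) P"
proof -
  have "mpow P (Suc n) = (\<lambda>x z. \<Sum>y\<in>UNIV. mpow P n x y * P y z)"
    by (simp add: fun_eq_iff)
  then show ?thesis by (simp add: vec_mat_assoc)
qed

lemma vec_mat_mpow_add:
  "vec_mat v (mpow P (m + n)) = vec_mat (vec_mat v (mpow P m)) (mpow P n)"
  by (induction n) (simp_all only: add_0_right add_Suc_right vec_mat_mpow_0 vec_mat_mpow_Suc)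

lemma vec_mat_mpow_Suc_left: "vec_mat v (mpow P (Suc n)) = vec_mat (vec_mat v P) (mpow P n)"
  using vec_mat_mpow_add[of v P "Suc 0" n] by (simp only: add_Suc add_0 vec_mat_mpow_Suc vec_mat_mpow_0)

lemma mpow_add: "mpow P (m + n) x z = vec_mat (mpow P m x) (mpow P n) z"
  by (metis vec_mat_point_mass vec_mat_mpow_add)

lemma vec_mat_add: "vec_mat (\<lambda>x. a x + b x) Q y = vec_mat a Q y + vec_mat b Q y"
  unfolding vec_mat_def by (simp add: distrib_right sum.distrib)

lemma vec_mat_diff: "vec_mat (\<lambda>x. a x - b x) Q y = vec_mat a Q y - vec_mat b Q y"
  unfolding vec_mat_def by (simp add: left_diff_distrib sum_subtractf)

lemma vec_mat_diff_right: "vec_mat v (\<lambda>x y. A x y - B x y) y = vec_mat v A y - vec_mat v B y"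
  unfolding vec_mat_def by (simp add: right_diff_distrib sum_subtractf)

lemma sum_vec_mat:
  assumes "stochastic_matrix Q"
  shows "(\<Sum>y\<in>UNIV. vec_mat v Q y) = (\<Sum>x\<in>UNIV. v x)"
proof -
  have "(\<Sum>y\<in>UNIV. vec_mat v Q y) = (\<Sum>x\<in>UNIV. \<Sum>y\<in>UNIV. v x * Q x y)"
    unfolding vec_mat_def by (rule sum.swap)
  also have "\<dots> = (\<Sum>x\<in>UNIV. v x * (\<Sum>y\<in>UNIV. Q x y))"
    by (simp add: sum_distrib_left)
  finally show ?thesis
    using assms unfolding stochastic_matrix_def by simp
qed

lemma mpow_Suc_row: "mpow P (Suc n) x = vec_mat (mpow P n x) P"
  by (simp add: vec_mat_def fun_eq_iff)

lemma stochastic_matrix_mpow: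
  assumes "stochastic_matrix P"
  shows "stochastic_matrix (mpow P n)"
proof (induction n)
  case 0
  show ?case by (simp add: stochastic_matrix_def)
next
  case (Suc n)
  have "(\<Sum>y\<in>UNIV. mpow P (Suc n) x y) = 1" for x
    using Suc sum_vec_mat[OF assms, of "mpow P n x"]
    unfolding mpow_Suc_row stochastic_matrix_def by simp
  moreover have "0 \<le> mpow P (Suc n) x y" for x y
    using Suc assms unfolding stochastic_matrix_def by (simp add: sum_nonneg)
  ultimately show ?case unfolding stochastic_matrix_def by blast
qed

lemma mpow_mult_le_mpow_add:
  assumes "stochastic_matrix P"
  shows "mpow P m x y * mpow P n y z \<le> mpow P (m + n) x z"
  unfolding mpow_add vec_mat_def
  using stochastic_matrix_mpow[OF assms] unfolding stochastic_matrix_def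
  by (intro member_le_sum) auto

lemma stationary_dist_vec_mat:
  assumes "stationary_dist P \<rho>"
  shows "vec_mat \<rho> P = \<rho>"
  using assms unfolding stationary_dist_def vec_mat_def by auto

lemma stationary_dist_vec_mat_mpow:
  assumes "stationary_dist P \<rho>"
  shows "vec_mat \<rho> (mpow P n) = \<rho>"
  by (induction n) (simp_all only: vec_mat_mpow_0 vec_mat_mpow_Suc stationary_dist_vec_mat[OF assms])

section \<open>The l1 norm and total variation\<close>

lemma norm1_add_le: "norm1 (\<lambda>x. a x + b x) \<le> norm1 a + norm1 b"
  unfolding norm1_def by (simp add: sum.distrib[symmetric] sum_mono abs_triangle_ineq)

lemma norm1_vec_mat_le_rows: "norm1 (vec_mat v A) \<le> (\<Sum>x\<in>UNIV. \<bar>v x\<bar> * (\<Sum>y\<in>UNIV. \<bar>A x y\<bar>))"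
proof -
  have "norm1 (vec_mat v A) \<le> (\<Sum>y\<in>UNIV. \<Sum>x\<in>UNIV. \<bar>v x\<bar> * \<bar>A x y\<bar>)"
    unfolding norm1_def vec_mat_def
    by (intro sum_mono order_trans[OF sum_abs]) (simp add: abs_mult)
  also have "\<dots> = (\<Sum>x\<in>UNIV. \<bar>v x\<bar> * (\<Sum>y\<in>UNIV. \<bar>A x y\<bar>))"
    by (subst sum.swap) (simp add: sum_distrib_left)
  finally show ?thesis .
qed

lemma norm1_vec_mat_le:
  assumes "stochastic_matrix Q"
  shows "norm1 (vec_mat v Q) \<le> norm1 v"
  using norm1_vec_mat_le_rows[of v Q] assms
  unfolding stochastic_matrix_def norm1_def by simp

lemma norm1_vec_mat_centered_le:
  assumes "(\<Sum>x\<in>UNIV. v x) = 0" and "\<And>x. (\<Sum>y\<in>UNIV. \<bar>Q x y - r y\<bar>) \<le> B"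
  shows "norm1 (vec_mat v Q) \<le> B * norm1 v"
proof -
  have "vec_mat v (\<lambda>x y. Q x y - r y) = vec_mat v Q"
    using assms(1) by (simp add: vec_mat_diff_right fun_eq_iff vec_mat_def sum_distrib_right[symmetric])
  then have "norm1 (vec_mat v Q) \<le> (\<Sum>x\<in>UNIV. \<bar>v x\<bar> * (\<Sum>y\<in>UNIV. \<bar>Q x y - r y\<bar>))"
    using norm1_vec_mat_le_rows[of v "\<lambda>x y. Q x y - r y"] by simp
  also have "\<dots> \<le> (\<Sum>x\<in>UNIV. \<bar>v x\<bar> * B)"
    by (intro sum_mono mult_left_mono assms(2)) simp
  finally show ?thesis by (simp add: norm1_def sum_distrib_left mult.commute)
qed

lemma sum_mult_ge_neg_half_norm1:
  fixes v f :: "'s::finite \<Rightarrow> real"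
  assumes "(\<Sum>x\<in>UNIV. v x) = 0" and f: "\<And>x. 0 \<le> f x \<and> f x \<le> 1"
  shows "- norm1 v / 2 \<le> (\<Sum>x\<in>UNIV. v x * f x)"
proof -
  have "(v x - \<bar>v x\<bar>) / 2 \<le> v x * f x" for x
  proof (cases "0 \<le> v x")
    case False
    then have "v x * 1 \<le> v x * f x" using f[of x] by (intro mult_left_mono_neg) auto
    with False show ?thesis by simp
  qed (use f[of x] in simp)
  then have "(\<Sum>x\<in>UNIV. (v x - \<bar>v x\<bar>) / 2) \<le> (\<Sum>x\<in>UNIV. v x * f x)"
    by (rule sum_mono)
  moreover have "(\<Sum>x\<in>UNIV. (v x - \<bar>v x\<bar>) / 2) = - norm1 v / 2"
    unfolding norm1_def using assms(1) by (simp add: sum_divide_distrib[symmetric] sum_subtractf)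
  ultimately show ?thesis by simp
qed

lemma norm1_point_mass_diff:
  assumes "prob_dist \<rho>"
  shows "norm1 (\<lambda>y. (if x = y then 1 else 0) - \<rho> y) \<le> 2"
proof -
  have "norm1 (\<lambda>y. (if x = y then 1 else 0) - \<rho> y) \<le> (\<Sum>y\<in>UNIV. (if x = y then 1 else 0) + \<rho> y)"
    unfolding norm1_def using assms unfolding prob_dist_def by (intro sum_mono) (auto simp: abs_le_iff)
  also have "\<dots> = 2"
    using assms unfolding prob_dist_def by (simp add: sum.distrib)
  finally show ?thesis .
qed

lemma tv_dist_ge: "\<bar>(\<Sum>x\<in>M. p x) - (\<Sum>x\<in>M. q x)\<bar> \<le> tv_dist p q"
  unfolding tv_dist_def by (rule Max_ge) auto

lemma tv_dist_le_norm1: "tv_dist p q \<le> norm1 (\<lambda>x. p x - q x)"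
proof -
  have "\<bar>(\<Sum>x\<in>M. p x) - (\<Sum>x\<in>M. q x)\<bar> \<le> norm1 (\<lambda>x. p x - q x)" for M
  proof -
    have "\<bar>(\<Sum>x\<in>M. p x) - (\<Sum>x\<in>M. q x)\<bar> \<le> (\<Sum>x\<in>M. \<bar>p x - q x\<bar>)"
      unfolding sum_subtractf[symmetric] by (rule sum_abs)
    also have "\<dots> \<le> norm1 (\<lambda>x. p x - q x)"
      unfolding norm1_def by (rule sum_mono2) auto
    finally show ?thesis .
  qed
  then show ?thesis unfolding tv_dist_def by (subst Max_le_iff) auto
qed

lemma norm1_le_tv_dist:
  assumes "(\<Sum>x\<in>UNIV. p x) = (\<Sum>x\<in>UNIV. q x)"
  shows "norm1 (\<lambda>x. p x - q x) \<le> 2 * tv_dist p q"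
proof -
  define M where "M = {x. q x \<le> p x}"
  have "\<bar>p x - q x\<bar> = 2 * (if x \<in> M then p x - q x else 0) - (p x - q x)" for x
    unfolding M_def by auto
  then have "norm1 (\<lambda>x. p x - q x)
      = 2 * (\<Sum>x\<in>UNIV. if x \<in> M then p x - q x else 0) - (\<Sum>x\<in>UNIV. p x - q x)"
    unfolding norm1_def by (simp add: sum_subtractf sum_distrib_left)
  also have "\<dots> = 2 * ((\<Sum>x\<in>M. p x) - (\<Sum>x\<in>M. q x))"
    using assms by (simp add: sum_subtractf sum.If_cases)
  also have "\<dots> \<le> 2 * tv_dist p q"
    using tv_dist_ge[where M = M and p = p and q = q] by simp
  finally show ?thesis .
qed

lemma tv_dist_mpow_0_imp_singleton:
  fixes \<rho> :: "'s::finite \<Rightarrow> real"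
  assumes "prob_dist \<rho>" and tv: "\<And>x. tv_dist (mpow P 0 x) \<rho> \<le> 1/4"
  obtains x0 :: 's where "UNIV = {x0}"
proof -
  have big: "3/4 \<le> \<rho> x" for x
    using tv_dist_ge[where M = "{x}" and p = "mpow P 0 x" and q = \<rho>] tv[of x]
    by (simp add: abs_le_iff)
  have "x = y" for x y :: 's
  proof (rule ccontr)
    assume "x \<noteq> y"
    moreover have "(\<Sum>z\<in>{x, y}. \<rho> z) \<le> (\<Sum>z\<in>UNIV. \<rho> z)"
      using assms(1) unfolding prob_dist_def by (intro sum_mono2) auto
    ultimately show False using big[of x] big[of y] assms(1) unfolding prob_dist_def by simp
  qed
  then show ?thesis using that by blast
qed

section \<open>Existence of the mixing time\<close>

lemma eventually_mpow_pos:
  assumes P: "stochastic_matrix P" and irr: "irreducible_chain P" and ap: "aperiodic_chain P"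
  shows "eventually (\<lambda>t. \<forall>x y. 0 < mpow P t x y) sequentially"
proof -
  have "eventually (\<lambda>t. 0 < mpow P t x y) sequentially" for x y
  proof -
    define A where "A = {n. 0 < mpow P n x x}"
    have add: "a + b \<in> A" if "a \<in> A" "b \<in> A" for a b
      using that mpow_mult_le_mpow_add[OF P, of a x x b x] unfolding A_def
      by (metis mem_Collect_eq mult_pos_pos order_less_le_trans)
    have "Gcd A = 1"
      using ap Gcd_remove0_nat[of A] unfolding aperiodic_chain_def A_def
      by (simp add: set_diff_eq conj_commute)
    then have "eventually (\<lambda>n. n \<in> A) sequentially"
      by (intro add_closed_Gcd_1_eventually add) (simp add: A_def)
    moreover obtain m where "0 < mpow P m x y"
      using irr unfolding irreducible_chain_def by blast
    ultimately have "eventually (\<lambda>n. 0 < mpow P (n + m) x y) sequentially"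
      using mpow_mult_le_mpow_add[OF P, of _ x x m y] unfolding A_def
      by (elim eventually_mono) (metis mem_Collect_eq mult_pos_pos order_less_le_trans)
    then show ?thesis using eventually_sequentially_seg[of "\<lambda>t. 0 < mpow P t x y" m] by blast
  qed
  then show ?thesis by (intro eventually_all_finite)
qed

lemma Doeblin_row_dist:
  fixes Q :: "'s::finite \<Rightarrow> 's \<Rightarrow> real"
  assumes "stochastic_matrix Q" and "\<And>y. \<delta> \<le> Q x y"
  shows "(\<Sum>y\<in>UNIV. \<bar>Q x y - \<delta>\<bar>) = 1 - real (card (UNIV :: 's set)) * \<delta>"
  using assms unfolding stochastic_matrix_def by (simp add: sum_subtractf)

lemma norm1_vec_mat_mpow_mult_le:
  assumes P: "stochastic_matrix P"
    and rows: "\<And>x. (\<Sum>y\<in>UNIV. \<bar>mpow P N x y - r y\<bar>) \<le> c" and "0 \<le> c"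
    and v: "(\<Sum>x\<in>UNIV. v x) = 0"
  shows "norm1 (vec_mat v (mpow P (j * N))) \<le> c ^ j * norm1 v"
proof (induction j)
  case 0
  show ?case by (simp only: mult_0 vec_mat_mpow_0) simp
next
  case (Suc j)
  define w where "w = vec_mat v (mpow P (j * N))"
  have "(\<Sum>x\<in>UNIV. w x) = 0"
    unfolding w_def using v by (simp add: sum_vec_mat stochastic_matrix_mpow[OF P])
  then have "norm1 (vec_mat w (mpow P N)) \<le> c * norm1 w"
    by (rule norm1_vec_mat_centered_le[OF _ rows])
  also have "\<dots> \<le> c * (c ^ j * norm1 v)"
    using Suc.IH \<open>0 \<le> c\<close> unfolding w_def by (rule mult_left_mono)
  finally show ?case
    unfolding w_def by (simp add: vec_mat_mpow_add[symmetric] add.commute mult.assoc del: mpow.simps)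
qed

lemma mixing_time_exists:
  fixes P :: "'s::finite \<Rightarrow> 's \<Rightarrow> real"
  assumes P: "stochastic_matrix P" and "irreducible_chain P" and "aperiodic_chain P"
    and stat: "stationary_dist P \<rho>"
  shows "\<exists>t. \<forall>x. tv_dist (mpow P t x) \<rho> \<le> 1/4"
proof -
  obtain N where "\<forall>n\<ge>N. \<forall>x y. 0 < mpow P n x y"
    using eventually_mpow_pos[OF assms(1-3)] unfolding eventually_sequentially by blast
  then have pos: "\<And>x y. 0 < mpow P N x y" by blast
  define \<delta> where "\<delta> = Min (range (case_prod (mpow P N)))"
  have \<delta>_le: "\<delta> \<le> mpow P N x y" for x y
    unfolding \<delta>_def by (rule Min_le) (auto intro: image_eqI[of _ _ "(x, y)"])
  have "0 < \<delta>" unfolding \<delta>_def using pos by (subst Min_gr_iff) auto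
  define c where "c = 1 - real (card (UNIV :: 's set)) * \<delta>"
  have rows: "(\<Sum>y\<in>UNIV. \<bar>mpow P N x y - \<delta>\<bar>) = c" for x
    unfolding c_def by (rule Doeblin_row_dist[OF stochastic_matrix_mpow[OF P] \<delta>_le])
  have "0 \<le> c" using rows by (metis sum_nonneg abs_ge_zero)
  moreover have "c < 1" unfolding c_def using \<open>0 < \<delta>\<close> by (simp add: card_gt_0_iff)
  ultimately obtain k where k: "c ^ k < 1/8"
    using real_arch_pow_inv[of "1/8" c] by auto
  have "tv_dist (mpow P (k * N) x) \<rho> \<le> 1/4" for x
  proof -
    define v where "v y = (if x = y then 1 else 0) - \<rho> y" for y
    have "(\<Sum>y\<in>UNIV. v y) = 0"
      using stat unfolding v_def stationary_dist_def prob_dist_def by (simp add: sum_subtractf)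
    then have "norm1 (vec_mat v (mpow P (k * N))) \<le> c ^ k * norm1 v"
      using norm1_vec_mat_mpow_mult_le[OF P eq_refl[OF rows] \<open>0 \<le> c\<close>] by blast
    also have "\<dots> \<le> c ^ k * 2"
      using norm1_point_mass_diff[of \<rho> x] stat \<open>0 \<le> c\<close>
      unfolding v_def stationary_dist_def by (simp add: mult_left_mono)
    also have "vec_mat v (mpow P (k * N)) = (\<lambda>y. mpow P (k * N) x y - \<rho> y)"
      unfolding v_def by (simp add: fun_eq_iff vec_mat_diff stationary_dist_vec_mat_mpow[OF stat]
          vec_mat_point_mass del: mpow.simps)
    finally show ?thesis
      using k tv_dist_le_norm1[of "mpow P (k * N) x" \<rho>] by simp
  qed
  then show ?thesis by blast
qed

lemma mixing_time:
  assumes "stochastic_matrix P" and "irreducible_chain P" and "aperiodic_chain P"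
    and "stationary_dist P \<rho>"
  shows "tv_dist (mpow P (mixing_time P \<rho>) x) \<rho> \<le> 1/4"
proof -
  obtain t where "\<And>x. tv_dist (mpow P t x) \<rho> \<le> 1/4"
    using mixing_time_exists[OF assms] by blast
  then have "\<exists>t. Max ((\<lambda>s'. tv_dist (mpow P t s') \<rho>) ` UNIV) \<le> 1/4"
    by (subst Max_le_iff) auto
  then have "Max ((\<lambda>s'. tv_dist (mpow P (mixing_time P \<rho>) s') \<rho>) ` UNIV) \<le> 1/4"
    unfolding mixing_time_def by (rule LeastI_ex)
  then show ?thesis by (subst (asm) Max_le_iff) auto
qed

section \<open>Perturbation of the stationary distribution\<close>

lemma norm1_diff_vec_mat_mpow_le:
  assumes P: "stochastic_matrix P" and d: "d = (\<lambda>y. vec_mat d P y + e y)"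
  shows "norm1 (\<lambda>y. d y - vec_mat d (mpow P t) y) \<le> real t * norm1 e"
proof (induction t)
  case 0
  show ?case by (simp only: vec_mat_mpow_0) (simp add: norm1_def)
next
  case (Suc t)
  have "vec_mat d (mpow P t) y = vec_mat d (mpow P (Suc t)) y + vec_mat e (mpow P t) y" for y
    by (subst d) (simp only: vec_mat_add vec_mat_mpow_Suc_left)
  then have "norm1 (\<lambda>y. d y - vec_mat d (mpow P (Suc t)) y)
      = norm1 (\<lambda>y. (d y - vec_mat d (mpow P t) y) + vec_mat e (mpow P t) y)"
    by (simp add: algebra_simps del: mpow.simps)
  also have "\<dots> \<le> real t * norm1 e + norm1 e"
    using Suc.IH norm1_vec_mat_le[OF stochastic_matrix_mpow[OF P], of e t]
    by (intro order_trans[OF norm1_add_le]) simp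
  finally show ?case by (simp add: algebra_simps del: mpow.simps)
qed

lemma stationary_dist_perturbation:
  fixes P Q :: "'s::finite \<Rightarrow> 's \<Rightarrow> real"
  assumes P: "stochastic_matrix P" and \<rho>: "stationary_dist P \<rho>" and \<sigma>: "stationary_dist Q \<sigma>"
    and mix: "\<And>x. tv_dist (mpow P t x) \<rho> \<le> 1/4"
  shows "norm1 (\<lambda>s. \<sigma> s - \<rho> s) \<le> 2 * real t * norm1 (vec_mat \<sigma> (\<lambda>x y. Q x y - P x y))"
proof -
  define d where "d s = \<sigma> s - \<rho> s" for s
  define e where "e = vec_mat \<sigma> (\<lambda>x y. Q x y - P x y)"
  have \<rho>P: "vec_mat \<rho> P = \<rho>" and \<sigma>Q: "vec_mat \<sigma> Q = \<sigma>"
    using \<rho> \<sigma> by (simp_all add: stationary_dist_vec_mat)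
  have sums: "(\<Sum>s\<in>UNIV. \<rho> s) = 1" "(\<Sum>s\<in>UNIV. \<sigma> s) = 1"
    using \<rho> \<sigma> unfolding stationary_dist_def prob_dist_def by auto
  have "d = (\<lambda>y. vec_mat d P y + e y)"
    unfolding d_def e_def vec_mat_diff vec_mat_diff_right \<rho>P \<sigma>Q by auto
  then have drift: "norm1 (\<lambda>y. d y - vec_mat d (mpow P t) y) \<le> real t * norm1 e"
    by (rule norm1_diff_vec_mat_mpow_le[OF P])
  have rows: "(\<Sum>y\<in>UNIV. \<bar>mpow P t x y - \<rho> y\<bar>) \<le> 1/2" for x
    using norm1_le_tv_dist[of "mpow P t x" \<rho>] mix[of x] sums stochastic_matrix_mpow[OF P, of t]
    unfolding stochastic_matrix_def norm1_def by simp
  have "(\<Sum>s\<in>UNIV. d s) = 0" unfolding d_def using sums by (simp add: sum_subtractf)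
  then have contract: "norm1 (vec_mat d (mpow P t)) \<le> 1/2 * norm1 d"
    by (rule norm1_vec_mat_centered_le[OF _ rows])
  have "norm1 d \<le> norm1 (vec_mat d (mpow P t)) + norm1 (\<lambda>y. d y - vec_mat d (mpow P t) y)"
    using norm1_add_le[of "vec_mat d (mpow P t)" "\<lambda>y. d y - vec_mat d (mpow P t) y"] by simp
  with drift contract show ?thesis unfolding d_def[symmetric] e_def[symmetric] by simp
qed

section \<open>Policies and induced chains\<close>

lemma stochastic_matrix_induced_chain:
  assumes "stoch_kernel T" and "policy pol"
  shows "stochastic_matrix (induced_chain pol T)"
proof -
  have "(\<Sum>y\<in>UNIV. induced_chain pol T x y) = (\<Sum>a\<in>UNIV. pol x a * (\<Sum>y\<in>UNIV. T x a y))" for x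
    unfolding induced_chain_def by (subst sum.swap) (simp add: sum_distrib_left)
  with assms show ?thesis
    unfolding stochastic_matrix_def stoch_kernel_def policy_def induced_chain_def
    by (simp add: sum_nonneg)
qed

lemma policy_le_1:
  assumes "policy pol"
  shows "pol s a \<le> 1"
proof -
  have "pol s a \<le> (\<Sum>b\<in>UNIV. pol s b)"
    using assms unfolding policy_def by (intro member_le_sum) auto
  with assms show ?thesis unfolding policy_def by simp
qed

lemma deterministic_policyE:
  assumes "deterministic_policy pol"
  obtains act where "\<And>s a. pol s a = (if a = act s then 1 else 0)"
proof -
  obtain act where act: "\<And>s. pol s (act s) = 1"
    using assms unfolding deterministic_policy_def by metis
  have "pol s a = 0" if "a \<noteq> act s" for s a
  proof -
    have "(\<Sum>b\<in>{act s, a}. pol s b) \<le> (\<Sum>b\<in>UNIV. pol s b)"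
      using assms unfolding deterministic_policy_def policy_def by (intro sum_mono2) auto
    then show ?thesis
      using assms act[of s] that unfolding deterministic_policy_def policy_def
      by (simp add: order_antisym)
  qed
  with act that show ?thesis by (metis (full_types))
qed

lemma trajectory_deterministic_action:
  assumes "trajectory pol T ss as" and pol: "\<And>s a. pol s a = (if a = act s then 1 else 0)"
    and "(s, a) \<in> set (zip ss as)"
  shows "a = act s"
proof -
  obtain n where "n < length ss" "ss ! n = s" "as ! n = a"
    using assms(3) by (auto simp: in_set_zip)
  then have "0 < pol s a" using assms(1) unfolding trajectory_def by auto
  then show ?thesis using pol[of s a] by (auto split: if_splits)
qed

lemma sa_expect_deterministic:
  assumes "\<And>s a. pol s a = (if a = act s then 1 else 0)"
  shows "sa_expect \<rho> pol R = (\<Sum>s\<in>UNIV. \<rho> s * R s (act s))"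
proof -
  have "(\<Sum>a\<in>UNIV. \<rho> s * pol s a * R s a) = (\<Sum>a\<in>UNIV. if a = act s then \<rho> s * R s a else 0)" for s
    by (rule sum.cong) (simp_all add: assms)
  then show ?thesis unfolding sa_expect_def by simp
qed

definition disagreement :: "('s::finite \<Rightarrow> real) \<Rightarrow> ('s \<Rightarrow> 'a::finite \<Rightarrow> real) \<Rightarrow> ('s \<Rightarrow> 'a) \<Rightarrow> real" where
  "disagreement \<rho> pol act = (\<Sum>s\<in>UNIV. \<rho> s * (1 - pol s (act s)))"

lemma disagreement_nonneg:
  assumes "\<And>s. 0 \<le> \<rho> s" and "policy pol"
  shows "0 \<le> disagreement \<rho> pol act"
  unfolding disagreement_def using assms policy_le_1[OF assms(2)] by (intro sum_nonneg) simp

lemma sa_expect_ge_action: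
  assumes "\<And>s. 0 \<le> \<rho> s" and "policy pol" and "\<And>s a. 0 \<le> R s a"
  shows "(\<Sum>s\<in>UNIV. \<rho> s * pol s (act s) * R s (act s)) \<le> sa_expect \<rho> pol R"
  unfolding sa_expect_def
  using assms unfolding policy_def by (intro sum_mono member_le_sum) auto

lemma sa_expect_indicator_le:
  assumes "\<And>s. 0 \<le> \<rho> s" and "policy pol" and D: "\<And>s a. (s, a) \<in> D \<Longrightarrow> a = act s"
  shows "sa_expect \<rho> pol (\<lambda>s a. if (s, a) \<in> D then 1 else 0) \<le> (\<Sum>s\<in>UNIV. \<rho> s * pol s (act s))"
proof -
  have "(\<Sum>a\<in>UNIV. \<rho> s * pol s a * (if (s, a) \<in> D then 1 else 0))
      = (\<Sum>a\<in>UNIV. if a = act s then \<rho> s * pol s a * (if (s, a) \<in> D then 1 else 0) else 0)" for s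
    by (rule sum.cong) (auto dest: D)
  also have "\<dots> s \<le> \<rho> s * pol s (act s)" for s
    using assms(1,2) unfolding policy_def by simp
  finally show ?thesis
    unfolding sa_expect_def by (intro sum_mono)
qed

lemma disagreement_le_indicator:
  assumes "prob_dist \<rho>" and "policy pol" and "\<And>s a. (s, a) \<in> D \<Longrightarrow> a = act s"
  shows "disagreement \<rho> pol act \<le> 1 - sa_expect \<rho> pol (\<lambda>s a. if (s, a) \<in> D then 1 else 0)"
  using sa_expect_indicator_le[of \<rho> pol D act] assms
  unfolding disagreement_def prob_dist_def by (simp add: algebra_simps sum_subtractf)

lemma sa_expect_ge_disagreement:
  assumes \<rho>: "prob_dist \<rho>" and \<sigma>: "prob_dist \<sigma>" and pol: "policy pol"
    and R: "\<And>s a. 0 \<le> R s a \<and> R s a \<le> 1"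
  shows "(\<Sum>s\<in>UNIV. \<sigma> s * R s (act s)) - norm1 (\<lambda>s. \<rho> s - \<sigma> s) / 2 - disagreement \<rho> pol act
           \<le> sa_expect \<rho> pol R"
proof -
  have "(\<Sum>s\<in>UNIV. \<sigma> s * R s (act s)) - norm1 (\<lambda>s. \<rho> s - \<sigma> s) / 2 \<le> (\<Sum>s\<in>UNIV. \<rho> s * R s (act s))"
    using sum_mult_ge_neg_half_norm1[of "\<lambda>s. \<rho> s - \<sigma> s" "\<lambda>s. R s (act s)"] \<rho> \<sigma> R
    unfolding prob_dist_def by (simp add: sum_subtractf left_diff_distrib)
  moreover have "(\<Sum>s\<in>UNIV. \<rho> s * R s (act s)) - disagreement \<rho> pol act
      \<le> (\<Sum>s\<in>UNIV. \<rho> s * pol s (act s) * R s (act s))"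
  proof -
    have "(\<Sum>s\<in>UNIV. \<rho> s * (1 - pol s (act s)) * R s (act s)) \<le> disagreement \<rho> pol act"
      unfolding disagreement_def using \<rho> policy_le_1[OF pol] R unfolding prob_dist_def
      by (intro sum_mono) (simp add: mult_left_le)
    then show ?thesis by (simp add: algebra_simps sum_subtractf)
  qed
  moreover have "(\<Sum>s\<in>UNIV. \<rho> s * pol s (act s) * R s (act s)) \<le> sa_expect \<rho> pol R"
    using \<rho> pol R unfolding prob_dist_def by (intro sa_expect_ge_action) auto
  ultimately show ?thesis by linarith
qed

lemma induced_chain_row_dist_le:
  assumes "stoch_kernel T"
  shows "(\<Sum>y\<in>UNIV. \<bar>induced_chain pol T x y - induced_chain pol' T x y\<bar>)
           \<le> (\<Sum>a\<in>UNIV. \<bar>pol x a - pol' x a\<bar>)"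
proof -
  have "(\<Sum>y\<in>UNIV. \<bar>induced_chain pol T x y - induced_chain pol' T x y\<bar>)
      \<le> (\<Sum>y\<in>UNIV. \<Sum>a\<in>UNIV. \<bar>pol x a - pol' x a\<bar> * T x a y)"
    unfolding induced_chain_def sum_subtractf[symmetric] left_diff_distrib[symmetric]
    using assms unfolding stoch_kernel_def
    by (intro sum_mono order_trans[OF sum_abs]) (simp add: abs_mult)
  also have "\<dots> = (\<Sum>a\<in>UNIV. \<bar>pol x a - pol' x a\<bar>)"
    using assms unfolding stoch_kernel_def
    by (subst sum.swap) (simp add: sum_distrib_left[symmetric])
  finally show ?thesis .
qed

lemma policy_dist_deterministic:
  assumes "policy pol"
  shows "(\<Sum>a\<in>UNIV. \<bar>pol x a - (if a = c then 1 else 0)\<bar>) = 2 * (1 - pol x c)"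
proof -
  have "(\<Sum>a\<in>UNIV. \<bar>pol x a - (if a = c then 1 else 0)\<bar>)
      = (1 - pol x c) + (\<Sum>a\<in>UNIV - {c}. pol x a)"
    using assms policy_le_1[OF assms, of x c] unfolding policy_def
    by (simp add: sum.remove[of UNIV c])
  also have "(\<Sum>a\<in>UNIV - {c}. pol x a) = 1 - pol x c"
    using assms unfolding policy_def by (simp add: sum_diff1)
  finally show ?thesis by simp
qed

lemma norm1_vec_mat_induced_chain_diff_le:
  assumes T: "stoch_kernel T" and "policy pol" and pol': "\<And>s a. pol' s a = (if a = act s then 1 else 0)"
    and \<rho>: "\<And>s. 0 \<le> \<rho> s"
  shows "norm1 (vec_mat \<rho> (\<lambda>x y. induced_chain pol T x y - induced_chain pol' T x y))
           \<le> 2 * disagreement \<rho> pol act"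
proof -
  have "norm1 (vec_mat \<rho> (\<lambda>x y. induced_chain pol T x y - induced_chain pol' T x y))
      \<le> (\<Sum>x\<in>UNIV. \<bar>\<rho> x\<bar> * (\<Sum>y\<in>UNIV. \<bar>induced_chain pol T x y - induced_chain pol' T x y\<bar>))"
    by (rule norm1_vec_mat_le_rows)
  also have "\<dots> \<le> (\<Sum>x\<in>UNIV. \<rho> x * (\<Sum>a\<in>UNIV. \<bar>pol x a - pol' x a\<bar>))"
    using \<rho> induced_chain_row_dist_le[OF T] by (intro sum_mono) (simp add: mult_left_mono)
  also have "\<dots> = 2 * disagreement \<rho> pol act"
    unfolding pol' policy_dist_deterministic[OF assms(2)] disagreement_def
    by (simp add: sum_distrib_left algebra_simps)
  finally show ?thesis .
qed

lemma sa_expect_ge_singleton: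
  fixes \<rho> \<sigma> :: "'s::finite \<Rightarrow> real" and x0 :: 's
  assumes U: "UNIV = {x0}" and \<rho>: "prob_dist \<rho>" and \<sigma>: "prob_dist \<sigma>" and pol: "policy pol"
    and pol': "\<And>s a. pol' s a = (if a = act s then 1 else 0)"
    and R: "\<And>s a. 0 \<le> R s a \<and> R s a \<le> 1"
  shows "(1 - disagreement \<rho> pol act) * sa_expect \<sigma> pol' R \<le> sa_expect \<rho> pol R"
proof -
  have "\<rho> x0 = 1" "\<sigma> x0 = 1"
    using \<rho> \<sigma> unfolding prob_dist_def U by auto
  then have "(1 - disagreement \<rho> pol act) * sa_expect \<sigma> pol' R
      = (\<Sum>s\<in>UNIV. \<rho> s * pol s (act s) * R s (act s))"
    unfolding sa_expect_deterministic[OF pol'] disagreement_def U by simp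
  also have "\<dots> \<le> sa_expect \<rho> pol R"
    using \<rho> pol R unfolding prob_dist_def by (intro sa_expect_ge_action) auto
  finally show ?thesis .
qed

lemma stationary_dist_l1_le_disagreement:
  assumes T: "stoch_kernel T" and pol: "policy pol"
    and pol': "\<And>s a. pol' s a = (if a = act s then 1 else 0)"
    and \<rho>: "stationary_dist (induced_chain pol' T) \<rho>" and \<sigma>: "stationary_dist (induced_chain pol T) \<sigma>"
    and mix: "\<And>x. tv_dist (mpow (induced_chain pol' T) t x) \<rho> \<le> 1/4"
  shows "norm1 (\<lambda>s. \<sigma> s - \<rho> s) \<le> 4 * (real t * disagreement \<sigma> pol act)"
proof -
  have "policy pol'"
    unfolding policy_def pol' by (simp add: if_distrib cong: if_cong)
  then have "stochastic_matrix (induced_chain pol' T)"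
    by (rule stochastic_matrix_induced_chain[OF T])
  then have "norm1 (\<lambda>s. \<sigma> s - \<rho> s)
      \<le> 2 * real t * norm1 (vec_mat \<sigma> (\<lambda>x y. induced_chain pol T x y - induced_chain pol' T x y))"
    using \<rho> \<sigma> mix by (rule stationary_dist_perturbation)
  also have "\<dots> \<le> 2 * real t * (2 * disagreement \<sigma> pol act)"
    using \<sigma> unfolding stationary_dist_def prob_dist_def
    by (intro mult_left_mono norm1_vec_mat_induced_chain_diff_le[OF T pol pol']) auto
  finally show ?thesis by simp
qed

theorem lemma7:
  fixes T :: "'s::finite \<Rightarrow> 'a::finite \<Rightarrow> 's \<Rightarrow> real"
    and piE piI :: "'s \<Rightarrow> 'a \<Rightarrow> real"
    and rhoES rhoIS :: "'s \<Rightarrow> real"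
    and ss :: "'s list" and as :: "'a list"
    and D :: "('s \<times> 'a) set"
    and kappa :: real
    and R :: "'s \<Rightarrow> 'a \<Rightarrow> real"
  assumes T: "stoch_kernel T"
    and E_det: "deterministic_policy piE"
    and E_irr: "irreducible_chain (induced_chain piE T)"
    and E_aper: "aperiodic_chain (induced_chain piE T)"
    and E_stat: "stationary_dist (induced_chain piE T) rhoES"
    and traj: "trajectory piE T ss as"
    and D_def: "D = set (zip ss as)"
    and I_pol: "policy piI"
    and I_irr: "irreducible_chain (induced_chain piI T)"
    and I_aper: "aperiodic_chain (induced_chain piI T)"
    and I_stat: "stationary_dist (induced_chain piI T) rhoIS"
    and kappa: "sa_expect rhoIS piI (\<lambda>s a. if (s, a) \<in> D then 1 else 0) = 1 - kappa"
    and R: "\<forall>s a. 0 \<le> R s a \<and> R s a \<le> 1"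
  shows "sa_expect rhoIS piI R \<ge>
           (1 - kappa) * sa_expect rhoES piE R
           - 4 * real (mixing_time (induced_chain piE T) rhoES) * kappa"
proof -
  obtain act where piE: "\<And>s a. piE s a = (if a = act s then 1 else 0)"
    using deterministic_policyE[OF E_det] by blast
  define tau where "tau = mixing_time (induced_chain piE T) rhoES"
  define kappa' where "kappa' = disagreement rhoIS piI act"
  define EE where "EE = (\<Sum>s\<in>UNIV. rhoES s * R s (act s))"
  have rhoI: "prob_dist rhoIS" and rhoE: "prob_dist rhoES"
    using I_stat E_stat unfolding stationary_dist_def by auto
  have "kappa' \<le> kappa"
    using disagreement_le_indicator[OF rhoI I_pol, of D act] kappa trajectory_deterministic_action[OF traj piE]
    unfolding kappa'_def D_def by auto
  have "0 \<le> kappa'"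
    unfolding kappa'_def using rhoI I_pol by (intro disagreement_nonneg) (auto simp: prob_dist_def)
  have "0 \<le> EE"
    unfolding EE_def using rhoE R by (auto simp: prob_dist_def intro: sum_nonneg)
  have "policy piE"
    using E_det unfolding deterministic_policy_def by blast
  have mix: "tv_dist (mpow (induced_chain piE T) tau x) rhoES \<le> 1/4" for x
    unfolding tau_def
    by (rule mixing_time[OF stochastic_matrix_induced_chain[OF T \<open>policy piE\<close>] E_irr E_aper E_stat])
  have dist: "norm1 (\<lambda>s. rhoIS s - rhoES s) \<le> 4 * (real tau * kappa')"
    unfolding kappa'_def by (rule stationary_dist_l1_le_disagreement[OF T I_pol piE E_stat I_stat mix])
  have EI: "EE - norm1 (\<lambda>s. rhoIS s - rhoES s) / 2 - kappa' \<le> sa_expect rhoIS piI R"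
    unfolding EE_def kappa'_def using rhoI rhoE I_pol R by (intro sa_expect_ge_disagreement) auto
  have EE: "sa_expect rhoES piE R = EE"
    unfolding EE_def by (rule sa_expect_deterministic[OF piE])
  show ?thesis
  proof (cases "tau = 0")
    case True
    then obtain x0 :: 's where "UNIV = {x0}"
      using tv_dist_mpow_0_imp_singleton[OF rhoE] mix by metis
    then have "(1 - kappa') * EE \<le> sa_expect rhoIS piI R"
      unfolding kappa'_def EE[symmetric] using R by (intro sa_expect_ge_singleton[OF _ rhoI rhoE I_pol piE]) auto
    moreover have "(1 - kappa) * EE \<le> (1 - kappa') * EE"
      using \<open>kappa' \<le> kappa\<close> \<open>0 \<le> EE\<close> by (simp add: mult_right_mono)
    ultimately show ?thesis unfolding EE tau_def[symmetric] True by simp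
  next
    case False
    then have "kappa' \<le> real tau * kappa'"
      using \<open>0 \<le> kappa'\<close> by (simp add: mult_le_cancel_right1)
    moreover have "real tau * kappa' \<le> real tau * kappa"
      using \<open>kappa' \<le> kappa\<close> by (rule mult_left_mono) simp
    moreover have "0 \<le> kappa * EE"
      using \<open>0 \<le> kappa'\<close> \<open>kappa' \<le> kappa\<close> \<open>0 \<le> EE\<close> by simp
    moreover have "(1 - kappa) * EE - 4 * real tau * kappa = EE - kappa * EE - 4 * (real tau * kappa)"
      by (simp add: algebra_simps)
    ultimately show ?thesis
      using EI dist \<open>0 \<le> kappa'\<close> unfolding EE tau_def[symmetric] by linarith
  qed
qed

end
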